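(* If $T \in \mathcal{T}$ has order $n$, then $\gamma_{\rm gr}^t(T) = \frac{2}{3}(n+1)$.
   Context: A leaf is a vertex of degree $1$ and a support vertex is a vertex adjacent to a leaf. Operation $\mathcal{O}_1$: given a tree $T'$ and a support vertex $v$ of $T'$, add a new path $v_1v_2v_3$ (three new vertices) and the edge $vv_1$. The family $\mathcal{T}$ is the smallest family of trees containing the path $P_2$ and closed under operation $\mathcal{O}_1$. $N(v)$ denotes the open neighborhood of $v$. A sequence $S=(v_1,\ldots,v_k)$ of distinct vertices of a graph $G$ without isolated vertices is a legal sequence if $N(v_i)\setminus \bigcup_{j=1}^{i-1} N(v_j)\neq\emptyset$ for every $i\in\{2,\ldots,k\}$, and a total dominating sequence if moreover $\{v_1,\ldots,v_k\}$ is a total dominating set of $G$. $\gamma_{\rm gr}^t(G)$ is the maximum length of a total dominating sequence of $G$. *)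

theory Defs
  imports Complex_Main
begin

definition nbhd :: "'a set set \<Rightarrow> 'a \<Rightarrow> 'a set" where
  "nbhd E v = {u. {u, v} \<in> E}"

definition is_leaf :: "'a set \<Rightarrow> 'a set set \<Rightarrow> 'a \<Rightarrow> bool" where
  "is_leaf V E x \<longleftrightarrow> x \<in> V \<and> card (nbhd E x) = 1"

definition support_vertex :: "'a set \<Rightarrow> 'a set set \<Rightarrow> 'a \<Rightarrow> bool" where
  "support_vertex V E v \<longleftrightarrow> v \<in> V \<and> (\<exists>x. is_leaf V E x \<and> {v, x} \<in> E)"

inductive family_T :: "'a set \<Rightarrow> 'a set set \<Rightarrow> bool" where
  P2: "a \<noteq> b \<Longrightarrow> family_T {a, b} {{a, b}}"
| O1: "\<lbrakk> family_T V E; support_vertex V E v;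
         v1 \<notin> V; v2 \<notin> V; v3 \<notin> V; v1 \<noteq> v2; v1 \<noteq> v3; v2 \<noteq> v3 \<rbrakk>
       \<Longrightarrow> family_T (V \<union> {v1, v2, v3}) (E \<union> {{v, v1}, {v1, v2}, {v2, v3}})"

definition legal_seq :: "'a set \<Rightarrow> 'a set set \<Rightarrow> 'a list \<Rightarrow> bool" where
  "legal_seq V E S \<longleftrightarrow> distinct S \<and> set S \<subseteq> V \<and>
     (\<forall>i. 1 \<le> i \<and> i < length S \<longrightarrow>
        nbhd E (S ! i) - (\<Union>j<i. nbhd E (S ! j)) \<noteq> {})"

definition total_dominating_set :: "'a set \<Rightarrow> 'a set set \<Rightarrow> 'a set \<Rightarrow> bool" where
  "total_dominating_set V E D \<longleftrightarrow> D \<subseteq> V \<and> (\<forall>x\<in>V. \<exists>d\<in>D. {x, d} \<in> E)"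

definition total_dom_seq :: "'a set \<Rightarrow> 'a set set \<Rightarrow> 'a list \<Rightarrow> bool" where
  "total_dom_seq V E S \<longleftrightarrow> legal_seq V E S \<and> total_dominating_set V E (set S)"

definition gamma_gr_t :: "'a set \<Rightarrow> 'a set set \<Rightarrow> nat" where
  "gamma_gr_t V E = Max {length S | S. total_dom_seq V E S}"

end

theory Submission
  imports Defs
begin

(* Pull a legal sequence of T' = O1(T) back to T: drop the new path v1 v2 v3, except that
   v1, if it footprints v, is replaced by the leaf x at v. This is again legal, and at most
   two vertices are lost, since v1 and v3 can only both occur in a legal sequence when v1
   footprints v. Hence by induction every legal sequence of T has length at most 2(n+1)/3.
   Conversely, appending v2, v3 to a total dominating sequence of T attaining this bound
   gives one of T' attaining it. *)

lemma legal_seq_Nil [simp]: "legal_seq V E []"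
  by (simp add: legal_seq_def)

lemma legal_seq_snoc_iff:
  "legal_seq V E (S @ [w]) \<longleftrightarrow> legal_seq V E S \<and> w \<notin> set S \<and> w \<in> V \<and>
     (S \<noteq> [] \<longrightarrow> \<not> nbhd E w \<subseteq> \<Union> (nbhd E ` set S))"
proof -
  have prefix_nth: "(S @ [w]) ! j = S ! j" if "j < length S" for j
    using that by (simp add: nth_append)
  have prefix_union: "(\<Union>j<i. nbhd E ((S @ [w]) ! j)) = (\<Union>j<i. nbhd E (S ! j))"
    if "i \<le> length S" for i
    using that prefix_nth by (intro SUP_cong) auto
  have whole_union: "(\<Union>j<length S. nbhd E (S ! j)) = \<Union> (nbhd E ` set S)"
    by (auto simp: set_conv_nth)
  define fresh where "fresh T i \<longleftrightarrow> nbhd E (T ! i) - (\<Union>j<i. nbhd E (T ! j)) \<noteq> {}" for T i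
  have "fresh (S @ [w]) i = fresh S i" if "i < length S" for i
    using that by (simp add: fresh_def prefix_nth prefix_union)
  moreover have "fresh (S @ [w]) (length S) \<longleftrightarrow> \<not> nbhd E w \<subseteq> \<Union> (nbhd E ` set S)"
    by (auto simp: fresh_def prefix_union whole_union)
  ultimately have "(\<forall>i. 1 \<le> i \<and> i < length (S @ [w]) \<longrightarrow> fresh (S @ [w]) i) \<longleftrightarrow>
        (\<forall>i. 1 \<le> i \<and> i < length S \<longrightarrow> fresh S i) \<and>
        (S \<noteq> [] \<longrightarrow> \<not> nbhd E w \<subseteq> \<Union> (nbhd E ` set S))"
    by (auto simp: less_Suc_eq Suc_le_eq)
  then show ?thesis
    by (auto simp: legal_seq_def fresh_def)
qed

lemma legal_seq_appendD: "legal_seq V E (S @ T) \<Longrightarrow> legal_seq V E S"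
  by (induction T rule: rev_induct) (auto simp: legal_seq_snoc_iff simp flip: append_assoc)

lemma legal_seq_new_neighbour:
  assumes "legal_seq V E (ys @ u # zs)" and "ys \<noteq> []"
  shows "\<not> nbhd E u \<subseteq> \<Union> (nbhd E ` set ys)"
  using legal_seq_appendD[of V E "ys @ [u]" zs] assms by (simp add: legal_seq_snoc_iff)

lemma legal_seq_map_filter:
  assumes "distinct S" and "inj_on g (set (filter P S))"
    and "\<And>u. u \<in> set S \<Longrightarrow> P u \<Longrightarrow> g u \<in> V"
    and "\<And>ys u zs. S = ys @ u # zs \<Longrightarrow> P u \<Longrightarrow> filter P ys \<noteq> [] \<Longrightarrow>
           \<not> nbhd E (g u) \<subseteq> \<Union> (nbhd E ` g ` set (filter P ys))"
  shows "legal_seq V E (map g (filter P S))"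
  using assms
proof (induction S rule: rev_induct)
  case Nil
  then show ?case by simp
next
  case (snoc w S)
  have "legal_seq V E (map g (filter P S))"
    using snoc.prems by (intro snoc.IH) (auto intro: inj_on_subset)
  moreover have "g w \<notin> g ` set (filter P S)" if "P w"
    using snoc.prems(1,2) that by (auto simp: inj_on_def)
  moreover have "\<not> nbhd E (g w) \<subseteq> \<Union> (nbhd E ` g ` set (filter P S))"
    if "P w" "filter P S \<noteq> []"
    using snoc.prems(4)[of S w "[]"] that by simp
  ultimately show ?case
    using snoc.prems(3) by (auto simp: legal_seq_snoc_iff)
qed

definition simple_graph :: "'a set \<Rightarrow> 'a set set \<Rightarrow> bool" where
  "simple_graph V E \<longleftrightarrow> (\<forall>e\<in>E. \<exists>a b. a \<noteq> b \<and> a \<in> V \<and> b \<in> V \<and> e = {a, b})"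

lemma simple_graph_edgeE:
  assumes "simple_graph V E" and "{u, w} \<in> E"
  obtains "u \<noteq> w" "u \<in> V" "w \<in> V"
proof -
  obtain a b where "a \<noteq> b" "a \<in> V" "b \<in> V" "{u, w} = {a, b}"
    using assms unfolding simple_graph_def by blast
  then show thesis
    using that by (auto simp: doubleton_eq_iff)
qed

lemma nbhd_subset: "simple_graph V E \<Longrightarrow> nbhd E u \<subseteq> V"
  by (auto simp: nbhd_def elim: simple_graph_edgeE)

lemma nbhd_irrefl:
  assumes "simple_graph V E"
  shows "u \<notin> nbhd E u"
proof
  assume "u \<in> nbhd E u"
  then have "{u, u} \<in> E"
    by (simp add: nbhd_def)
  then show False
    by (rule simple_graph_edgeE[OF assms]) simp
qed

lemma nbhd_eq_empty: "simple_graph V E \<Longrightarrow> u \<notin> V \<Longrightarrow> nbhd E u = {}"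
  by (auto simp: nbhd_def elim: simple_graph_edgeE)

lemma nbhd_sym: "u \<in> nbhd E w \<longleftrightarrow> w \<in> nbhd E u"
  by (simp add: nbhd_def insert_commute)

lemma simple_graph_empty: "simple_graph V {}"
  by (simp add: simple_graph_def)

lemma simple_graph_insert_edge:
  assumes "simple_graph V E" and "a \<noteq> b" "a \<in> V" "b \<in> V"
  shows "simple_graph V (insert {a, b} E)"
  unfolding simple_graph_def
proof
  fix e assume "e \<in> insert {a, b} E"
  then show "\<exists>a b. a \<noteq> b \<and> a \<in> V \<and> b \<in> V \<and> e = {a, b}"
  proof
    assume "e = {a, b}"
    with assms(2-4) show ?thesis by blast
  next
    assume "e \<in> E"
    with assms(1) show ?thesis by (simp add: simple_graph_def)
  qed
qed

lemma family_T_finite_simple_graph: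
  "family_T V E \<Longrightarrow> finite V \<and> simple_graph V E"
proof (induction rule: family_T.induct)
  case (P2 a b)
  then show ?case
    by (simp add: simple_graph_insert_edge simple_graph_empty)
next
  case (O1 V E v v1 v2 v3)
  then have "v \<in> V"
    by (simp add: support_vertex_def)
  let ?V' = "V \<union> {v1, v2, v3}"
  have "simple_graph ?V' E"
    using O1.IH unfolding simple_graph_def by blast
  then have "simple_graph ?V' (insert {v, v1} (insert {v1, v2} (insert {v2, v3} E)))"
    using \<open>v \<in> V\<close> O1.hyps(3-8) by (intro simple_graph_insert_edge) auto
  then show ?case
    using O1.IH by (simp add: insert_commute)
qed

locale O1_extension =
  fixes V :: "'a set" and E :: "'a set set" and v x v1 v2 v3 :: 'a
  assumes simple: "simple_graph V E"
    and leaf: "x \<in> V" "nbhd E x = {v}"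
    and new: "v1 \<notin> V" "v2 \<notin> V" "v3 \<notin> V" "distinct [v1, v2, v3]"
begin

abbreviation "V' \<equiv> V \<union> {v1, v2, v3}"
abbreviation "E' \<equiv> E \<union> {{v, v1}, {v1, v2}, {v2, v3}}"

lemma v_in_V: "v \<in> V"
  using leaf nbhd_subset[OF simple] by auto

lemma v_neq_x: "v \<noteq> x"
  using leaf nbhd_irrefl[OF simple] by auto

lemma nbhd_ext:
  "nbhd E' u = nbhd E u \<union> (if u = v then {v1} else {}) \<union> (if u = v1 then {v, v2} else {})
     \<union> (if u = v2 then {v1, v3} else {}) \<union> (if u = v3 then {v2} else {})"
  by (auto simp: nbhd_def doubleton_eq_iff)

lemma nbhd_ext_old: "u \<in> V \<Longrightarrow> u \<noteq> v \<Longrightarrow> nbhd E' u = nbhd E u"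
  using new unfolding nbhd_ext by auto

lemma nbhd_ext_in_V: "u \<in> V \<Longrightarrow> nbhd E' u \<subseteq> insert v1 (nbhd E u)"
  using new unfolding nbhd_ext by auto

lemma nbhd_ext_v1: "nbhd E' v1 = {v, v2}"
  using new v_in_V nbhd_eq_empty[OF simple, of v1] unfolding nbhd_ext by auto

lemma nbhd_ext_v2: "nbhd E' v2 = {v1, v3}"
  using new v_in_V nbhd_eq_empty[OF simple, of v2] unfolding nbhd_ext by auto

lemma nbhd_ext_v3: "nbhd E' v3 = {v2}"
  using new v_in_V nbhd_eq_empty[OF simple, of v3] unfolding nbhd_ext by auto

lemma nbhd_ext_x: "nbhd E' x = {v}"
  using leaf v_neq_x nbhd_ext_old by simp

lemma nbhd_subset_ext: "nbhd E u \<subseteq> nbhd E' u"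
  unfolding nbhd_ext by blast

definition v1_footprints_v :: "'a list \<Rightarrow> bool" where
  "v1_footprints_v S \<longleftrightarrow> (\<exists>ys zs. S = ys @ v1 # zs \<and> v \<notin> \<Union> (nbhd E' ` set ys))"

lemma v1_footprints_v_if_v3:
  assumes legal: "legal_seq V' E' S" and "v1 \<in> set S" "v3 \<in> set S"
  shows "v1_footprints_v S"
proof (rule ccontr)
  assume not_fp: "\<not> v1_footprints_v S"
  obtain ys zs where S: "S = ys @ v1 # zs"
    using \<open>v1 \<in> set S\<close> by (meson split_list)
  then have v_dom: "v \<in> \<Union> (nbhd E' ` set ys)"
    using not_fp by (auto simp: v1_footprints_v_def)
  show False
  proof (cases "v3 \<in> set ys")
    case True
    then have "nbhd E' v1 \<subseteq> \<Union> (nbhd E' ` set ys)"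
      using v_dom nbhd_ext_v1 nbhd_ext_v3 by auto
    moreover have "ys \<noteq> []"
      using True by auto
    ultimately show False
      using legal_seq_new_neighbour[of V' E' ys v1 zs] legal S by simp
  next
    case False
    then have "v3 \<in> set zs"
      using \<open>v3 \<in> set S\<close> S new(4) by auto
    then obtain zs1 zs2 where "zs = zs1 @ v3 # zs2"
      by (meson split_list)
    then have "S = (ys @ v1 # zs1) @ v3 # zs2"
      using S by simp
    moreover have "nbhd E' v3 \<subseteq> \<Union> (nbhd E' ` set (ys @ v1 # zs1))"
      using nbhd_ext_v1 nbhd_ext_v3 by auto
    ultimately show False
      using legal_seq_new_neighbour[of V' E' "ys @ v1 # zs1" v3 zs2] legal by simp
  qed
qed

lemma leaf_notin_if_v1_footprints_v:
  assumes legal: "legal_seq V' E' S" and "v1_footprints_v S"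
  shows "x \<notin> set S"
proof
  assume "x \<in> set S"
  obtain ys zs where S: "S = ys @ v1 # zs" and v_undom: "v \<notin> \<Union> (nbhd E' ` set ys)"
    using \<open>v1_footprints_v S\<close> by (auto simp: v1_footprints_v_def)
  have "x \<notin> set ys"
    using v_undom nbhd_ext_x by auto
  then have "x \<in> set zs"
    using \<open>x \<in> set S\<close> S new(1) leaf(1) by auto
  then obtain zs1 zs2 where "zs = zs1 @ x # zs2"
    by (meson split_list)
  then have "S = (ys @ v1 # zs1) @ x # zs2"
    using S by simp
  moreover have "nbhd E' x \<subseteq> \<Union> (nbhd E' ` set (ys @ v1 # zs1))"
    using nbhd_ext_v1 nbhd_ext_x by auto
  ultimately show False
    using legal_seq_new_neighbour[of V' E' "ys @ v1 # zs1" x zs2] legal by simp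
qed

definition kept :: "'a list \<Rightarrow> 'a \<Rightarrow> bool" where
  "kept S w \<longleftrightarrow> w \<in> V \<or> w = v1 \<and> v1_footprints_v S"

definition to_old :: "'a \<Rightarrow> 'a" where
  "to_old w = (if w = v1 then x else w)"

definition restrict_seq :: "'a list \<Rightarrow> 'a list" where
  "restrict_seq S = map to_old (filter (kept S) S)"

lemma nbhd_to_old_subset: "nbhd E (to_old w) \<subseteq> nbhd E' w"
  using leaf(2) nbhd_ext_v1 nbhd_subset_ext by (simp add: to_old_def)

lemma UN_nbhd_to_old_subset:
  "A \<subseteq> B \<Longrightarrow> \<Union> (nbhd E ` to_old ` A) \<subseteq> \<Union> (nbhd E' ` B)"
  unfolding image_image by (rule UN_mono) (simp_all only: nbhd_to_old_subset)

lemma leaf_notin_UN_nbhd_to_old: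
  assumes "v \<notin> A"
  shows "x \<notin> \<Union> (nbhd E ` to_old ` A)"
proof
  assume "x \<in> \<Union> (nbhd E ` to_old ` A)"
  then obtain w where "w \<in> A" and x_nb: "x \<in> nbhd E (to_old w)"
    by blast
  show False
  proof (cases "w = v1")
    case True
    then show False
      using x_nb nbhd_irrefl[OF simple, of x] by (simp add: to_old_def)
  next
    case False
    have "w \<notin> nbhd E x"
      using \<open>w \<in> A\<close> assms leaf(2) by auto
    with False x_nb show False
      by (simp add: nbhd_sym to_old_def)
  qed
qed

lemma v1_footprints_v_prefix:
  assumes "distinct S" "v1_footprints_v S" "S = ys @ v1 # zs"
  shows "v \<notin> \<Union> (nbhd E' ` set ys)"
proof -
  obtain ys' zs' where S': "S = ys' @ v1 # zs'" and "v \<notin> \<Union> (nbhd E' ` set ys')"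
    using assms(2) by (auto simp: v1_footprints_v_def)
  moreover have "v1 \<notin> set ys" "v1 \<notin> set zs"
    using assms(1,3) by auto
  then have "ys' = ys"
    using append_Cons_eq_iff[of v1 ys zs ys' zs'] assms(3) S' by simp
  ultimately show ?thesis
    by simp
qed

lemma legal_seq_restrict_new_neighbour:
  assumes legal: "legal_seq V' E' S" and S: "S = ys @ u # zs"
    and "kept S u" and "filter (kept S) ys \<noteq> []"
  shows "\<not> nbhd E (to_old u) \<subseteq> \<Union> (nbhd E ` to_old ` set (filter (kept S) ys))"
    (is "\<not> _ \<subseteq> ?U_old")
proof -
  let ?U_new = "\<Union> (nbhd E' ` set ys)"
  have "distinct S"
    using legal by (simp add: legal_seq_def)
  have U_old_subset: "?U_old \<subseteq> ?U_new"
    by (rule UN_nbhd_to_old_subset) auto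
  consider "u = v1" | "u = v" | "u \<in> V" "u \<noteq> v" "u \<noteq> v1"
    using \<open>kept S u\<close> by (auto simp: kept_def)
  then show ?thesis
  proof cases
    case 1
    then have "v1_footprints_v S"
      using \<open>kept S u\<close> new(1) by (simp add: kept_def)
    then have "v \<notin> ?U_new"
      using v1_footprints_v_prefix \<open>distinct S\<close> S 1 by blast
    then have "v \<notin> ?U_old"
      using U_old_subset by blast
    moreover have "v \<in> nbhd E (to_old u)"
      using 1 leaf(2) by (simp add: to_old_def)
    ultimately show ?thesis
      by blast
  next
    case 2
    then have "x \<notin> ?U_old"
      using \<open>distinct S\<close> S by (intro leaf_notin_UN_nbhd_to_old) auto
    moreover have "x \<in> nbhd E (to_old u)"
    proof -
      have "x \<in> nbhd E v"
        using leaf(2) nbhd_sym[of v E x] by simp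
      moreover have "v \<noteq> v1"
        using new(1) v_in_V by blast
      ultimately show ?thesis
        using 2 by (simp add: to_old_def)
    qed
    ultimately show ?thesis
      by blast
  next
    case 3
    have "ys \<noteq> []"
      using \<open>filter (kept S) ys \<noteq> []\<close> by auto
    then have "\<not> nbhd E' u \<subseteq> ?U_new"
      using legal_seq_new_neighbour[of V' E' ys u zs] legal S by simp
    moreover have "nbhd E (to_old u) = nbhd E' u"
      using 3 nbhd_ext_old[of u] by (simp add: to_old_def)
    ultimately show ?thesis
      using order.trans[OF _ U_old_subset] by metis
  qed
qed

lemma legal_seq_restrict_seq:
  assumes legal: "legal_seq V' E' S"
  shows "legal_seq V E (restrict_seq S)"
  unfolding restrict_seq_def
proof (rule legal_seq_map_filter)
  show "distinct S"
    using legal by (simp add: legal_seq_def)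
  show "inj_on to_old (set (filter (kept S) S))"
    using leaf_notin_if_v1_footprints_v[OF legal] new(1) leaf(1)
    by (auto simp: inj_on_def kept_def to_old_def)
  show "to_old u \<in> V" if "kept S u" for u
    using that leaf(1) by (auto simp: kept_def to_old_def)
qed (use legal_seq_restrict_new_neighbour[OF legal] in blast)

lemma length_le_restrict_seq:
  assumes legal: "legal_seq V' E' S"
  shows "length S \<le> length (restrict_seq S) + 2"
proof -
  let ?R = "filter (\<lambda>w. \<not> kept S w) S"
  have "distinct ?R" and R_new: "set ?R \<subseteq> {v1, v2, v3}"
    using legal by (auto simp: legal_seq_def kept_def)
  have "\<not> (v1 \<in> set ?R \<and> v3 \<in> set ?R)"
    using v1_footprints_v_if_v3[OF legal] by (auto simp: kept_def)
  with R_new have "set ?R \<subseteq> {v2, v3} \<or> set ?R \<subseteq> {v1, v2}"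
    by blast
  then obtain a b where "set ?R \<subseteq> {a, b}"
    by blast
  then have "card (set ?R) \<le> card {a, b}"
    by (rule card_mono[rotated]) simp
  also have "\<dots> \<le> 2"
    by (simp add: card_insert_le_m1)
  finally have "length ?R \<le> 2"
    using distinct_card[OF \<open>distinct ?R\<close>] by simp
  moreover have "length S = length (filter (kept S) S) + length ?R"
    by (rule sum_length_filter_compl[symmetric])
  ultimately show ?thesis
    by (simp add: restrict_seq_def)
qed

lemma nbhd_ext_in_V_subset: "u \<in> V \<Longrightarrow> nbhd E' u \<subseteq> insert v1 V"
  using nbhd_ext_in_V nbhd_subset[OF simple] by blast

lemma legal_seq_ext: "legal_seq V E S \<Longrightarrow> legal_seq V' E' S"
proof (induction S rule: rev_induct)
  case Nil
  then show ?case by simp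
next
  case (snoc w S)
  then have legal: "legal_seq V E S" and "w \<notin> set S" "w \<in> V"
    and fresh: "S \<noteq> [] \<Longrightarrow> \<not> nbhd E w \<subseteq> \<Union> (nbhd E ` set S)"
    by (simp_all add: legal_seq_snoc_iff)
  have "\<not> nbhd E' w \<subseteq> \<Union> (nbhd E' ` set S)" if S_ne: "S \<noteq> []"
  proof -
    obtain y where y: "y \<in> nbhd E w" "y \<notin> \<Union> (nbhd E ` set S)"
      using fresh[OF S_ne] by blast
    have "y \<noteq> v1"
      using y(1) nbhd_subset[OF simple] new(1) by blast
    moreover have "set S \<subseteq> V"
      using legal by (simp add: legal_seq_def)
    ultimately have "y \<notin> \<Union> (nbhd E' ` set S)"
      using y(2) nbhd_ext_in_V by blast
    moreover have "y \<in> nbhd E' w"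
      using y(1) nbhd_subset_ext by blast
    ultimately show ?thesis
      by blast
  qed
  with snoc.IH[OF legal] \<open>w \<notin> set S\<close> \<open>w \<in> V\<close> show ?case
    by (simp add: legal_seq_snoc_iff)
qed

lemma legal_seq_append_path:
  assumes "legal_seq V E S"
  shows "legal_seq V' E' (S @ [v2, v3])"
proof -
  have "set S \<subseteq> V"
    using assms by (simp add: legal_seq_def)
  then have old_nbs: "\<Union> (nbhd E' ` set S) \<subseteq> insert v1 V"
    using nbhd_ext_in_V_subset by blast
  have "v3 \<in> nbhd E' v2" "v3 \<notin> insert v1 V"
    using nbhd_ext_v2 new by auto
  then have v2_fresh: "\<not> nbhd E' v2 \<subseteq> \<Union> (nbhd E' ` set S)"
    using old_nbs by blast
  have "v2 \<in> nbhd E' v3" "v2 \<notin> insert v1 V" "v2 \<notin> nbhd E' v2"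
    using nbhd_ext_v2 nbhd_ext_v3 new by auto
  then have v3_fresh: "\<not> nbhd E' v3 \<subseteq> nbhd E' v2 \<union> \<Union> (nbhd E' ` set S)"
    using old_nbs by blast
  have "v2 \<notin> set S" "v3 \<notin> set (S @ [v2])"
    using \<open>set S \<subseteq> V\<close> new by auto
  with legal_seq_ext[OF assms] v2_fresh v3_fresh
  have "legal_seq V' E' ((S @ [v2]) @ [v3])"
    by (simp add: legal_seq_snoc_iff del: append_assoc)
  then show ?thesis
    by simp
qed

lemma total_dominating_set_ext:
  assumes "total_dominating_set V E D"
  shows "total_dominating_set V' E' (D \<union> {v2, v3})"
  unfolding total_dominating_set_def
proof (intro conjI ballI)
  show "D \<union> {v2, v3} \<subseteq> V'"
    using assms unfolding total_dominating_set_def by blast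
  fix y assume "y \<in> V'"
  then consider "y \<in> V" | "y = v1" | "y = v2" | "y = v3"
    by blast
  then show "\<exists>d\<in>D \<union> {v2, v3}. {y, d} \<in> E'"
  proof cases
    case 1
    then obtain d where "d \<in> D" "{y, d} \<in> E"
      using assms unfolding total_dominating_set_def by blast
    then show ?thesis
      by blast
  next
    case 2
    then show ?thesis
      by (intro bexI[of _ v2]) simp_all
  next
    case 3
    then show ?thesis
      by (intro bexI[of _ v3]) simp_all
  next
    case 4
    then show ?thesis
      by (intro bexI[of _ v2]) (simp_all add: insert_commute)
  qed
qed

end

lemma support_vertex_obtain_leaf:
  assumes "support_vertex V E v"
  obtains x where "x \<in> V" "nbhd E x = {v}"
proof -
  obtain x where "x \<in> V" "card (nbhd E x) = 1" "{v, x} \<in> E"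
    using assms by (auto simp: support_vertex_def is_leaf_def)
  moreover from this have "v \<in> nbhd E x"
    by (simp add: nbhd_def)
  ultimately show thesis
    using that by (metis card_1_singletonE singletonD)
qed

lemma legal_seq_length_le_card: "legal_seq V E S \<Longrightarrow> finite V \<Longrightarrow> length S \<le> card V"
  unfolding legal_seq_def by (metis card_mono distinct_card)

lemma total_dom_seq_edge:
  assumes "a \<noteq> b"
  shows "total_dom_seq {a, b} {{a, b}} [a, b]"
proof -
  have "nbhd {{a, b}} b = {a}" "nbhd {{a, b}} a = {b}"
    using assms by (auto simp: nbhd_def doubleton_eq_iff)
  moreover have "legal_seq {a, b} {{a, b}} [a]"
    using legal_seq_snoc_iff[of "{a, b}" "{{a, b}}" "[]" a] by simp
  ultimately have "legal_seq {a, b} {{a, b}} [a, b]"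
    using legal_seq_snoc_iff[of "{a, b}" "{{a, b}}" "[a]" b] assms by simp
  then show ?thesis
    by (auto simp: total_dom_seq_def total_dominating_set_def insert_commute)
qed

lemma family_T_legal_seq_bounds:
  assumes "family_T V E"
  shows "(\<forall>S. legal_seq V E S \<longrightarrow> 3 * length S \<le> 2 * (card V + 1)) \<and>
         (\<exists>S. total_dom_seq V E S \<and> 3 * length S = 2 * (card V + 1))"
  using assms
proof (induction rule: family_T.induct)
  case (P2 a b)
  then show ?case
    using legal_seq_length_le_card[of "{a, b}" "{{a, b}}"] total_dom_seq_edge[of a b]
    by fastforce
next
  case (O1 V E v v1 v2 v3)
  obtain x where "x \<in> V" "nbhd E x = {v}"
    using O1.hyps(2) by (rule support_vertex_obtain_leaf)
  moreover have "finite V" "simple_graph V E"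
    using family_T_finite_simple_graph[OF O1.hyps(1)] by auto
  ultimately interpret O1_extension V E v x v1 v2 v3
    using O1.hyps(3-8) by unfold_locales auto
  have card_ext: "card V' = card V + 3"
    using \<open>finite V\<close> O1.hyps(3-8) by simp
  have "3 * length S \<le> 2 * (card V' + 1)" if "legal_seq V' E' S" for S
  proof -
    have "3 * length (restrict_seq S) \<le> 2 * (card V + 1)"
      using O1.IH legal_seq_restrict_seq[OF that] by blast
    then show ?thesis
      using length_le_restrict_seq[OF that] card_ext by simp
  qed
  moreover obtain S where "total_dom_seq V E S" "3 * length S = 2 * (card V + 1)"
    using O1.IH by blast
  then have "total_dom_seq V' E' (S @ [v2, v3])" "3 * length (S @ [v2, v3]) = 2 * (card V' + 1)"
    using legal_seq_append_path total_dominating_set_ext card_ext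
    by (auto simp: total_dom_seq_def Un_commute)
  ultimately show ?case
    by blast
qed

lemma gamma_gr_t_eqI:
  assumes "total_dom_seq V E S" and "\<And>S'. total_dom_seq V E S' \<Longrightarrow> length S' \<le> length S"
  shows "gamma_gr_t V E = length S"
  unfolding gamma_gr_t_def
proof (rule Max_eqI)
  show "finite {length S' | S'. total_dom_seq V E S'}"
    by (rule finite_subset[OF _ finite_atMost[of "length S"]]) (auto dest: assms(2))
  show "length S \<in> {length S' | S'. total_dom_seq V E S'}"
    using assms(1) by blast
qed (auto dest: assms(2))

theorem mainTheorem10:
  fixes V :: "'a set" and E :: "'a set set" and n :: nat
  assumes "family_T V E" and "card V = n"
  shows "real (gamma_gr_t V E) = 2 / 3 * (real n + 1)"
proof -
  note bounds = family_T_legal_seq_bounds[OF assms(1), unfolded assms(2)]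
  obtain S where S: "total_dom_seq V E S" and S_len: "3 * length S = 2 * (n + 1)"
    using conjunct2[OF bounds] by blast
  have "length S' \<le> length S" if "total_dom_seq V E S'" for S'
  proof -
    have "legal_seq V E S'"
      using that by (simp add: total_dom_seq_def)
    then have "3 * length S' \<le> 2 * (n + 1)"
      using conjunct1[OF bounds] by blast
    with S_len show ?thesis
      by linarith
  qed
  with S have "gamma_gr_t V E = length S"
    by (rule gamma_gr_t_eqI)
  with S_len show ?thesis
    by simp
qed

end
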